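(* Let $K\ge2$, $s\in(0,1)$, $q_1\ge\cdots\ge q_K>0$ with $\sum_{i=1}^Kq_i+s=1$. Let $\alpha_i=\log_{q_1}q_i$, let $R_0>1$ be the unique positive root of $\sum_{i=1}^KX^{-\alpha_i}=1$, let $-\beta=\log q_1/\log R_0$, and let $\overline{\mu}_K=\frac1K\sum_{i=1}^K\log_Kq_i$. Then $\overline{\mu}_K\le-\beta$, with equality when $q_1=\cdots=q_K$.
   Context: $-\beta$ is the exponent of the power law $B_r\approx r^{-\beta}$ for ranked word base values in the monkey-at-the-typewriter model with letter probabilities $q_i$ and space probability $s$. $\log_K$ denotes logarithm to base $K$. *)

theory Defs
  imports Complex_Main
begin

definition alpha :: "(nat \<Rightarrow> real) \<Rightarrow> nat \<Rightarrow> real" where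
  "alpha q i = log (q 1) (q i)"

definition mu_bar :: "nat \<Rightarrow> (nat \<Rightarrow> real) \<Rightarrow> real" where
  "mu_bar K q = (1 / real K) * (\<Sum>i=1..K. log (real K) (q i))"

definition neg_beta :: "(nat \<Rightarrow> real) \<Rightarrow> real \<Rightarrow> real" where
  "neg_beta q R0 = ln (q 1) / ln R0"

end

theory Submission
  imports Defs
begin

text \<open>With \<open>t = - ln R\<^sub>0 / ln q\<^sub>1 > 0\<close> the defining equation of \<open>R\<^sub>0\<close> reads
  \<open>\<Sum> q\<^sub>i\<^sup>t = 1\<close>, and \<open>-\<beta> = -1/t\<close>. The inequality is then AM-GM for the \<open>K\<close> numbers
  \<open>q\<^sub>i\<^sup>t\<close> with sum \<open>1\<close>: the mean of their logarithms is at most \<open>ln (1/K)\<close>, with equality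
  when they are all equal.\<close>

lemma sum_ln_le_of_sum_eq_1:
  fixes x :: "'a \<Rightarrow> real"
  assumes "finite A" and pos: "\<And>i. i \<in> A \<Longrightarrow> x i > 0" and sum1: "sum x A = 1"
  shows "(\<Sum>i\<in>A. ln (x i)) \<le> - real (card A) * ln (real (card A))"
proof -
  define n where "n = real (card A)"
  have "A \<noteq> {}" using sum1 by auto
  hence n: "n > 0" using \<open>finite A\<close> by (simp add: n_def card_gt_0_iff)
  have "ln (x i) + ln n \<le> n * x i - 1" if "i \<in> A" for i
    using ln_le_minus_one[of "n * x i"] pos[OF that] n by (simp add: ln_mult)
  hence "(\<Sum>i\<in>A. ln (x i) + ln n) \<le> (\<Sum>i\<in>A. n * x i - 1)"
    by (rule sum_mono)
  thus ?thesis
    using sum1 by (simp add: sum.distrib sum_subtractf sum_distrib_left[symmetric] n_def)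
qed

lemma mu_bar_eq_sum_ln:
  "mu_bar K q = (\<Sum>i=1..K. ln (q i)) / (real K * ln (real K))"
  by (simp add: mu_bar_def log_def sum_divide_distrib[symmetric])

lemma mu_bar_le:
  assumes "K \<ge> 2" and pos: "\<And>i. 1 \<le> i \<Longrightarrow> i \<le> K \<Longrightarrow> q i > 0"
    and "t > 0" and sum1: "(\<Sum>i=1..K. q i powr t) = 1"
  shows "mu_bar K q \<le> - 1 / t"
proof -
  have "(\<Sum>i=1..K. ln (q i powr t)) \<le> - real (card {1..K}) * ln (real (card {1..K}))"
    using sum1 by (intro sum_ln_le_of_sum_eq_1) (auto simp: pos dual_order.strict_implies_not_eq)
  moreover have "(\<Sum>i=1..K. ln (q i powr t)) = t * (\<Sum>i=1..K. ln (q i))"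
    using pos by (simp add: ln_powr sum_distrib_left)
  ultimately have "t * (\<Sum>i=1..K. ln (q i)) \<le> - (real K * ln (real K))" by simp
  moreover have "real K * ln (real K) > 0" using \<open>K \<ge> 2\<close> by simp
  ultimately show ?thesis
    using \<open>t > 0\<close> by (simp add: mu_bar_eq_sum_ln divide_le_eq field_simps)
qed

lemma mu_bar_eq_if_const:
  assumes "K \<ge> 2" and "q 1 > 0" and const: "\<forall>i\<in>{1..K}. q i = q 1"
    and "t > 0" and sum1: "(\<Sum>i=1..K. q i powr t) = 1"
  shows "mu_bar K q = - 1 / t"
proof -
  have K: "real K > 0" "ln (real K) > 0" using \<open>K \<ge> 2\<close> by simp_all
  have "(\<Sum>i=1..K. q i powr t) = (\<Sum>i=1..K. q 1 powr t)"
    by (rule sum.cong) (metis const)+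
  hence "real K * q 1 powr t = 1"
    using sum1 by simp
  hence "ln (real K * q 1 powr t) = 0"
    by simp
  hence "ln (real K) + t * ln (q 1) = 0"
    using \<open>q 1 > 0\<close> K by (simp add: ln_mult ln_powr)
  hence ln_q1: "ln (q 1) = - ln (real K) / t"
    using \<open>t > 0\<close> by (simp add: field_simps)
  have "(\<Sum>i=1..K. ln (q i)) = (\<Sum>i=1..K. ln (q 1))"
    by (rule sum.cong) (metis const)+
  hence "mu_bar K q = ln (q 1) / ln (real K)"
    using K by (simp add: mu_bar_eq_sum_ln)
  also have "\<dots> = - 1 / t"
    unfolding ln_q1 using K(2) by (simp add: field_simps)
  finally show ?thesis .
qed

lemma powr_neg_alpha:
  assumes "R > 0" "q 1 > 0" "q i > 0"
  shows "R powr (- alpha q i) = q i powr (- ln R / ln (q 1))"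
  using assms by (simp add: powr_def alpha_def log_def)

theorem proposition1:
  fixes K :: nat and s R0 :: real and q :: "nat \<Rightarrow> real"
  assumes hK: "K \<ge> 2"
    and hs: "0 < s" "s < 1"
    and hmono: "\<And>i j. 1 \<le> i \<Longrightarrow> i \<le> j \<Longrightarrow> j \<le> K \<Longrightarrow> q j \<le> q i"
    and hpos: "\<And>i. 1 \<le> i \<Longrightarrow> i \<le> K \<Longrightarrow> q i > 0"
    and hsum: "(\<Sum>i=1..K. q i) + s = 1"
    and hR0: "R0 > 1"
    and hroot: "(\<Sum>i=1..K. R0 powr (- alpha q i)) = 1"
    and huniq: "\<And>X. X > 0 \<Longrightarrow> (\<Sum>i=1..K. X powr (- alpha q i)) = 1 \<Longrightarrow> X = R0"
  shows "mu_bar K q \<le> neg_beta q R0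
         \<and> ((\<forall>i\<in>{1..K}. q i = q 1) \<longrightarrow> mu_bar K q = neg_beta q R0)"
proof -
  define t where "t = - ln R0 / ln (q 1)"
  have q1: "q 1 > 0" using hpos hK by simp
  have "q 1 \<le> (\<Sum>i=1..K. q i)"
    using hK hpos by (intro member_le_sum) (auto intro: less_imp_le)
  hence "q 1 < 1" using hsum hs by linarith
  hence "ln (q 1) < 0" using q1 by simp
  hence t: "t > 0" using hR0 by (simp add: t_def divide_pos_neg)
  have "(\<Sum>i=1..K. R0 powr (- alpha q i)) = (\<Sum>i=1..K. q i powr t)"
    unfolding t_def using hR0 q1 hpos by (intro sum.cong refl powr_neg_alpha) auto
  hence sum1: "(\<Sum>i=1..K. q i powr t) = 1" using hroot by simp
  have "neg_beta q R0 = - 1 / t"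
    using \<open>ln (q 1) < 0\<close> hR0 by (simp add: neg_beta_def t_def)
  with mu_bar_le[OF hK hpos t sum1] mu_bar_eq_if_const[OF hK q1 _ t sum1]
  show ?thesis by metis
qed

end
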